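(* Let $X=[0,1]^d$, let $Y$ be a convex subset of a finite-dimensional normed space, let $\mathcal{M}\subset X$ be a compact smooth $m$-dimensional embedded manifold, and let $\rho$ be a probability density on $\mathcal{M}$ with $\inf_{\mathcal{M}}\rho>0$. Let $y:X\to Y$ be the label function and $\ell:Y\times Y\to\mathbb{R}$ a loss with $\ell(y_1,y_2)\ge0$, equality iff $y_1=y_2$, which is strictly convex in its first argument. Fix $\lambda>0$ and let $J[u]=\int_{\mathcal{M}}\ell(u(x),y(x))\rho\,dVol(x)+\lambda\,\mathrm{Lip}(u)$. If $u,v\in W^{1,\infty}(X;Y)$ are two minimizers of $J$, then $u=v$ on $\mathcal{M}$.
   Context: $W^{1,\infty}(X;Y)$ is the space of Lipschitz maps $X\to Y$; $\mathrm{Lip}(u)$ is the Lipschitz constant of $u$. *)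

theory Defs
  imports "HOL-Analysis.Analysis"
begin

fun Ck_on :: "nat \<Rightarrow> 'a::real_normed_vector set \<Rightarrow> ('a \<Rightarrow> 'c::real_normed_vector) \<Rightarrow> bool" where
  "Ck_on 0 U f = continuous_on U f"
| "Ck_on (Suc k) U f = (f differentiable_on U \<and>
      (\<forall>v. Ck_on k U (\<lambda>x. frechet_derivative f (at x) v)))"

definition smooth_on :: "'a::real_normed_vector set \<Rightarrow> ('a \<Rightarrow> 'c::real_normed_vector) \<Rightarrow> bool" where
  "smooth_on U f \<longleftrightarrow> (\<forall>k. Ck_on k U f)"

definition embedded_submanifold :: "nat \<Rightarrow> 'a::euclidean_space set \<Rightarrow> bool" where
  "embedded_submanifold m M \<longleftrightarrow> m \<le> DIM('a) \<and>
     (\<forall>p\<in>M. \<exists>U V (\<phi>::'a\<Rightarrow>'a) \<psi> L. open U \<and> p \<in> U \<and> open V \<and>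
        smooth_on U \<phi> \<and> smooth_on V \<psi> \<and> \<phi> ` U = V \<and>
        (\<forall>x\<in>U. \<psi> (\<phi> x) = x) \<and> (\<forall>z\<in>V. \<phi> (\<psi> z) = z) \<and>
        subspace L \<and> dim L = m \<and> \<phi> ` (M \<inter> U) = V \<inter> L)"

section \<open>m-dimensional Hausdorff measure (= Riemannian volume on an m-dim submanifold)\<close>

definition hcontent :: "nat \<Rightarrow> 'a::metric_space set \<Rightarrow> real" where
  "hcontent m S = (if S = {} then 0 else unit_ball_vol (real m) * (diameter S / 2) ^ m)"

definition hausdorff_delta :: "nat \<Rightarrow> real \<Rightarrow> 'a::metric_space set \<Rightarrow> ennreal" where
  "hausdorff_delta m \<delta> A =
     (INF C \<in> {C :: nat \<Rightarrow> 'a set. A \<subseteq> (\<Union>i. C i) \<and> (\<forall>i. bounded (C i) \<and> diameter (C i) \<le> \<delta>)}.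
        (\<Sum>i. ennreal (hcontent m (C i))))"

definition hausdorff_measure :: "nat \<Rightarrow> 'a::metric_space set \<Rightarrow> ennreal" where
  "hausdorff_measure m A = (SUP \<delta> \<in> {0<..}. hausdorff_delta m \<delta> A)"

definition Vol :: "nat \<Rightarrow> 'a::euclidean_space set \<Rightarrow> 'a measure" where
  "Vol m M = measure_of M {M \<inter> B | B. B \<in> sets borel} (hausdorff_measure m)"

definition Lip :: "'a::metric_space set \<Rightarrow> ('a \<Rightarrow> 'b::metric_space) \<Rightarrow> real" where
  "Lip X u = Inf {C. C-lipschitz_on X u}"

definition W1inf :: "'a::metric_space set \<Rightarrow> 'b::metric_space set \<Rightarrow> ('a \<Rightarrow> 'b) set" where
  "W1inf X Y = {u. u ` X \<subseteq> Y \<and> (\<exists>C. C-lipschitz_on X u)}"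

definition strictly_convex_on :: "'b::real_vector set \<Rightarrow> ('b \<Rightarrow> real) \<Rightarrow> bool" where
  "strictly_convex_on Y f \<longleftrightarrow> (\<forall>a\<in>Y. \<forall>b\<in>Y. \<forall>t::real. a \<noteq> b \<and> 0 < t \<and> t < 1 \<longrightarrow>
      f ((1 - t) *\<^sub>R a + t *\<^sub>R b) < (1 - t) * f a + t * f b)"

definition Jfun :: "'a measure \<Rightarrow> ('b \<Rightarrow> 'b \<Rightarrow> real) \<Rightarrow> ('a \<Rightarrow> 'b) \<Rightarrow> ('a \<Rightarrow> real) \<Rightarrow> real
                    \<Rightarrow> 'a::metric_space set \<Rightarrow> ('a \<Rightarrow> 'b::metric_space) \<Rightarrow> ennreal" where
  "Jfun \<mu> loss y \<rho> lam X u = (\<integral>\<^sup>+ x. ennreal (loss (u x) (y x) * \<rho> x) \<partial>\<mu>) + ennreal (lam * Lip X u)"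

definition is_minimizer :: "('a \<Rightarrow> 'b) set \<Rightarrow> (('a \<Rightarrow> 'b) \<Rightarrow> ennreal) \<Rightarrow> ('a \<Rightarrow> 'b) \<Rightarrow> bool" where
  "is_minimizer W J u \<longleftrightarrow> u \<in> W \<and> J u < \<infinity> \<and> (\<forall>w\<in>W. J u \<le> J w)"

end

theory Submission
  imports Defs
begin

text \<open>Let u and v be minimizers and w their pointwise midpoint. Since Y is convex, w is
  admissible, and Lip w \<le> (Lip u + Lip v) / 2. By convexity of the loss, the data term of w is
  pointwise at most the average of those of u and v; as J u and J v are both at most J w, this
  convexity gap must vanish almost everywhere on M. Strict convexity makes the gap positive wherever
  u \<noteq> v, and by continuity this happens on a relatively open ball of M as soon as it happens at
  one point. Such a ball has positive m-dimensional Hausdorff measure: a submanifold chart maps it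
  Lipschitz-continuously onto a set containing an m-dimensional cube, and a Lipschitz map enlarges
  Hausdorff content at most by a constant factor.\<close>

section \<open>Positivity of the Hausdorff measure of submanifolds\<close>

lemma emeasure_PiM_box:
  assumes "finite I" and "\<And>j. j \<in> I \<Longrightarrow> a j \<le> b j"
  shows "emeasure (PiM I (\<lambda>_. lborel)) (PiE I (\<lambda>j. {a j..b j})) = ennreal (\<Prod>j\<in>I. b j - a j)"
proof -
  interpret product_sigma_finite "\<lambda>_. lborel" by standard
  have "emeasure (PiM I (\<lambda>_. lborel)) (PiE I (\<lambda>j. {a j..b j})) = (\<Prod>j\<in>I. emeasure lborel {a j..b j})"
    using assms(1) by (rule emeasure_PiM) auto
  also have "\<dots> = ennreal (\<Prod>j\<in>I. b j - a j)"
    using assms(2) by (simp add: prod_ennreal)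
  finally show ?thesis .
qed

lemma emeasure_PiM_cube:
  assumes "finite I" and "0 \<le> r"
  shows "emeasure (PiM I (\<lambda>_. lborel)) (PiE I (\<lambda>j. {c j - r..c j + r})) = ennreal ((2 * r) ^ card I)"
  using assms by (simp add: emeasure_PiM_box)

lemma sets_PiM_box: "finite I \<Longrightarrow> PiE I (\<lambda>j. {a j..b j::real}) \<in> sets (PiM I (\<lambda>_. lborel))"
  by (rule sets_PiM_I_finite) auto

lemma hausdorff_measure_mono: "A \<subseteq> B \<Longrightarrow> hausdorff_measure m A \<le> hausdorff_measure m B"
  unfolding hausdorff_measure_def hausdorff_delta_def
  by (intro SUP_mono' INF_superset_mono) auto

lemma emeasure_PiM_cube_diameter:
  assumes "0 \<le> K" "bounded C" "C \<noteq> {}"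
  shows "emeasure (PiM {..<m} (\<lambda>_. lborel)) (PiE {..<m} (\<lambda>j. {z j - K * diameter C .. z j + K * diameter C}))
    = ennreal ((4 * K) ^ m / unit_ball_vol m) * ennreal (hcontent m C)"
proof -
  have "0 \<le> diameter C" using assms(2) by (rule diameter_ge_0)
  then have "emeasure (PiM {..<m} (\<lambda>_. lborel)) (PiE {..<m} (\<lambda>j. {z j - K * diameter C .. z j + K * diameter C}))
      = ennreal ((2 * (K * diameter C)) ^ m)"
    using assms(1) by (simp add: emeasure_PiM_cube)
  also have "(2 * (K * diameter C)) ^ m = (4 * K * (diameter C / 2)) ^ m" by simp
  also have "\<dots> = (4 * K) ^ m * (diameter C / 2) ^ m" by (rule power_mult_distrib)
  also have "\<dots> = (4 * K) ^ m / unit_ball_vol m * hcontent m C"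
  proof -
    have "unit_ball_vol (real m) \<noteq> 0" using unit_ball_vol_pos[of "real m"] by linarith
    then show ?thesis using assms(3) by (simp add: hcontent_def)
  qed
  also have "ennreal \<dots> = ennreal ((4 * K) ^ m / unit_ball_vol m) * ennreal (hcontent m C)"
    using assms(1) by (intro ennreal_mult') simp
  finally show ?thesis .
qed

lemma emeasure_le_hcontent_sum_of_lipschitz_coordinates:
  fixes G :: "'a::metric_space \<Rightarrow> nat \<Rightarrow> real" and C :: "nat \<Rightarrow> 'a set"
  assumes K: "0 \<le> K"
    and G: "\<And>s t j. s \<in> T \<Longrightarrow> t \<in> T \<Longrightarrow> j < m \<Longrightarrow> \<bar>G s j - G t j\<bar> \<le> K * dist s t"
    and Q: "Q \<in> sets (PiM {..<m} (\<lambda>_. lborel))" "Q \<subseteq> G ` T"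
    and C: "T \<subseteq> (\<Union>i. C i)" "\<And>i. bounded (C i)"
  shows "emeasure (PiM {..<m} (\<lambda>_. lborel)) Q
    \<le> ennreal ((4 * K) ^ m / unit_ball_vol m) * (\<Sum>i. ennreal (hcontent m (C i)))"
proof -
  define P where "P = PiM {..<m} (\<lambda>_. lborel :: real measure)"
  define c where "c = (4 * K) ^ m / unit_ball_vol m"
  define p where "p i = (SOME t. t \<in> C i \<inter> T)" for i
  define cube where "cube i = (if C i \<inter> T = {} then {} else
    PiE {..<m} (\<lambda>j. {G (p i) j - K * diameter (C i) .. G (p i) j + K * diameter (C i)}))" for i
  have p: "p i \<in> C i \<inter> T" if "C i \<inter> T \<noteq> {}" for i
    unfolding p_def using that by (metis ex_in_conv someI_ex)
  have cube_sets: "cube i \<in> sets P" for i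
    unfolding cube_def P_def by (auto intro: sets_PiM_box)
  have "Q \<subseteq> (\<Union>i. cube i)"
  proof
    fix q assume "q \<in> Q"
    then have q: "q \<in> PiE {..<m} (\<lambda>_. UNIV)"
      using sets.sets_into_space[OF Q(1)] by (auto simp: space_PiM)
    obtain t where t: "t \<in> T" "q = G t" using \<open>q \<in> Q\<close> Q(2) by blast
    then obtain i where i: "t \<in> C i" using C(1) by blast
    then have ne: "C i \<inter> T \<noteq> {}" using t by blast
    have "q j \<in> {G (p i) j - K * diameter (C i) .. G (p i) j + K * diameter (C i)}" if "j < m" for j
    proof -
      have "\<bar>q j - G (p i) j\<bar> \<le> K * dist t (p i)" using G t p[OF ne] that by blast
      also have "\<dots> \<le> K * diameter (C i)"
        using K i p[OF ne] C(2) by (intro mult_left_mono diameter_bounded_bound) auto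
      finally show ?thesis by (simp add: abs_le_iff)
    qed
    then have "q \<in> cube i" using q ne unfolding cube_def by (auto simp: PiE_iff)
    then show "q \<in> (\<Union>i. cube i)" by blast
  qed
  have cube_measure: "emeasure P (cube i) \<le> ennreal c * ennreal (hcontent m (C i))" for i
  proof (cases "C i \<inter> T = {}")
    case False
    then have "C i \<noteq> {}" by blast
    from emeasure_PiM_cube_diameter[OF K C(2) this] show ?thesis
      using False unfolding P_def cube_def c_def by simp
  qed (simp add: cube_def)
  have "emeasure P Q \<le> emeasure P (\<Union>i. cube i)"
    using \<open>Q \<subseteq> (\<Union>i. cube i)\<close> cube_sets by (intro emeasure_mono) auto
  also have "\<dots> \<le> (\<Sum>i. emeasure P (cube i))"
    using cube_sets by (intro emeasure_subadditive_countably) auto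
  also have "\<dots> \<le> (\<Sum>i. ennreal c * ennreal (hcontent m (C i)))"
    using cube_measure by (intro suminf_le) auto
  also have "\<dots> = ennreal c * (\<Sum>i. ennreal (hcontent m (C i)))" by simp
  finally show ?thesis unfolding P_def c_def .
qed

lemma hausdorff_measure_pos_of_lipschitz_coordinates:
  fixes G :: "'a::metric_space \<Rightarrow> nat \<Rightarrow> real"
  assumes K: "0 < K"
    and G: "\<And>s t j. s \<in> T \<Longrightarrow> t \<in> T \<Longrightarrow> j < m \<Longrightarrow> \<bar>G s j - G t j\<bar> \<le> K * dist s t"
    and Q: "Q \<in> sets (PiM {..<m} (\<lambda>_. lborel))" "Q \<subseteq> G ` T"
      "0 < emeasure (PiM {..<m} (\<lambda>_. lborel)) Q"
  shows "0 < hausdorff_measure m T"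
proof -
  define c where "c = (4 * K) ^ m / unit_ball_vol m"
  have c: "0 < c" unfolding c_def using K by simp
  have "ennreal (1 / c) * emeasure (PiM {..<m} (\<lambda>_. lborel)) Q \<le> hausdorff_delta m 1 T"
    unfolding hausdorff_delta_def
  proof (rule INF_greatest, clarify)
    fix C :: "nat \<Rightarrow> 'a set"
    assume "T \<subseteq> (\<Union>i. C i)" "\<forall>i. bounded (C i) \<and> diameter (C i) \<le> 1"
    then have "emeasure (PiM {..<m} (\<lambda>_. lborel)) Q \<le> ennreal c * (\<Sum>i. ennreal (hcontent m (C i)))"
      unfolding c_def using K G Q
      by (intro emeasure_le_hcontent_sum_of_lipschitz_coordinates) auto
    then have "ennreal (1 / c) * emeasure (PiM {..<m} (\<lambda>_. lborel)) Q
        \<le> ennreal (1 / c) * (ennreal c * (\<Sum>i. ennreal (hcontent m (C i))))"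
      by (rule mult_left_mono) simp
    also have "\<dots> = (\<Sum>i. ennreal (hcontent m (C i)))"
      using c by (simp add: mult.assoc[symmetric] ennreal_mult[symmetric])
    finally show "ennreal (1 / c) * emeasure (PiM {..<m} (\<lambda>_. lborel)) Q
        \<le> (\<Sum>i. ennreal (hcontent m (C i)))" .
  qed
  also have "\<dots> \<le> hausdorff_measure m T"
    unfolding hausdorff_measure_def by (rule SUP_upper) auto
  finally have "ennreal (1 / c) * emeasure (PiM {..<m} (\<lambda>_. lborel)) Q \<le> hausdorff_measure m T" .
  moreover have "0 < ennreal (1 / c) * emeasure (PiM {..<m} (\<lambda>_. lborel)) Q"
    using c Q(3) by (simp add: ennreal_zero_less_mult_iff)
  ultimately show ?thesis by (rule order.strict_trans2[rotated])
qed

lemma Ck_on_1_locally_lipschitz: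
  fixes f :: "'a::euclidean_space \<Rightarrow> 'b::real_normed_vector"
  assumes f: "Ck_on 1 U f" and U: "open U" "x0 \<in> U"
  obtains e K where "0 < e" "0 < K" "cball x0 e \<subseteq> U" "K-lipschitz_on (cball x0 e) f"
proof -
  obtain e where e: "0 < e" "cball x0 e \<subseteq> U" using U open_contains_cball by blast
  define D where "D x = frechet_derivative f (at x)" for x
  have D: "(f has_derivative D x) (at x)" if "x \<in> U" for x
    using f U that unfolding D_def
    by (simp add: differentiable_on_eq_differentiable_at frechet_derivative_works[symmetric])
  have "continuous_on (cball x0 e) (\<lambda>x. \<Sum>j\<in>Basis. norm (D x j))"
    using f e(2) unfolding D_def by (auto intro!: continuous_intros intro: continuous_on_subset)
  then obtain B where B: "\<And>x. x \<in> cball x0 e \<Longrightarrow> (\<Sum>j\<in>Basis. norm (D x j)) \<le> B"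
    using continuous_attains_sup[of "cball x0 e"] e(1) by force
  define K where "K = max B 1"
  have onorm_D: "onorm (D x) \<le> K" if "x \<in> cball x0 e" for x
    using has_derivative_bounded_linear[OF D] that e(2) B[OF that] unfolding K_def
    by (intro onorm_componentwise_le) auto
  have D_within: "(f has_derivative D x) (at x within cball x0 e)" if "x \<in> cball x0 e" for x
    using D that e(2) by (blast intro: has_derivative_at_withinI)
  have "K-lipschitz_on (cball x0 e) f"
  proof (rule lipschitz_onI)
    fix x y assume "x \<in> cball x0 e" "y \<in> cball x0 e"
    then have "norm (f x - f y) \<le> K * norm (x - y)"
      using D_within onorm_D by (intro differentiable_bound[where f'=D and S="cball x0 e"]) auto
    then show "dist (f x) (f y) \<le> K * dist x y" by (simp add: dist_norm)
  qed (simp add: K_def)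
  moreover have "0 < K" by (simp add: K_def)
  ultimately show ?thesis using that e by blast
qed

lemma embedded_submanifold_lipschitz_chart:
  fixes M :: "'a::euclidean_space set"
  assumes M: "embedded_submanifold m M" and x0: "x0 \<in> M" and r: "0 < r"
  obtains \<phi> :: "'a \<Rightarrow> 'a" and L K \<delta> s
  where "subspace L" "dim L = m" "0 < K" "0 < \<delta>" "\<delta> \<le> r" "0 < s" "\<phi> x0 \<in> L"
    "K-lipschitz_on (M \<inter> ball x0 \<delta>) \<phi>" "L \<inter> ball (\<phi> x0) s \<subseteq> \<phi> ` (M \<inter> ball x0 \<delta>)"
proof -
  obtain U V L and \<phi> \<psi> :: "'a \<Rightarrow> 'a" where chart: "open U" "x0 \<in> U" "open V"
      "smooth_on U \<phi>" "smooth_on V \<psi>" "\<forall>x\<in>U. \<psi> (\<phi> x) = x"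
      "subspace L" "dim L = m" "\<phi> ` (M \<inter> U) = V \<inter> L"
    using M x0 unfolding embedded_submanifold_def by blast
  obtain e K where e: "0 < e" "0 < K" "cball x0 e \<subseteq> U" "K-lipschitz_on (cball x0 e) \<phi>"
    using Ck_on_1_locally_lipschitz[of U \<phi> x0] chart(1,2,4) unfolding smooth_on_def by blast
  define \<delta> where "\<delta> = min e r"
  have \<delta>: "0 < \<delta>" "\<delta> \<le> r" using e(1) r by (auto simp: \<delta>_def)
  have lip: "K-lipschitz_on (M \<inter> ball x0 \<delta>) \<phi>"
    using e(4) by (rule lipschitz_on_subset) (auto simp: \<delta>_def)
  have z0: "\<phi> x0 \<in> V" "\<phi> x0 \<in> L" using chart(9) x0 chart(2) by blast+
  obtain s1 where s1: "0 < s1" "ball (\<phi> x0) s1 \<subseteq> V" using chart(3) z0(1) open_contains_ball by blast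
  have "continuous_on V \<psi>" using chart(5) unfolding smooth_on_def by (metis Ck_on.simps(1))
  then obtain s2 where s2: "0 < s2" "\<forall>z\<in>V. dist z (\<phi> x0) < s2 \<longrightarrow> dist (\<psi> z) (\<psi> (\<phi> x0)) < \<delta>"
    using z0(1) \<delta>(1) unfolding continuous_on_iff by blast
  have img: "L \<inter> ball (\<phi> x0) (min s1 s2) \<subseteq> \<phi> ` (M \<inter> ball x0 \<delta>)"
  proof
    fix z assume z: "z \<in> L \<inter> ball (\<phi> x0) (min s1 s2)"
    then have "z \<in> V" using s1(2) by auto
    then obtain x where x: "x \<in> M" "x \<in> U" "z = \<phi> x" using chart(9) z by blast
    then have "dist x x0 < \<delta>" using s2(2) \<open>z \<in> V\<close> z chart(2,6) by (auto simp: dist_commute)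
    then show "z \<in> \<phi> ` (M \<inter> ball x0 \<delta>)" using x by (auto simp: dist_commute)
  qed
  show ?thesis by (rule that[OF chart(7,8) e(2) \<delta> _ z0(2) lip img]) (simp add: s1(1) s2(1))
qed

lemma subspace_orthonormal_frame:
  fixes L :: "'a::euclidean_space set"
  assumes "subspace L" "dim L = m"
  obtains b where "\<And>i. i < m \<Longrightarrow> b i \<in> L"
    "\<And>i k. i < m \<Longrightarrow> k < m \<Longrightarrow> b i \<bullet> b k = (if i = k then 1 else 0)"
proof -
  obtain B where B: "B \<subseteq> L" "pairwise orthogonal B" "\<And>x. x \<in> B \<Longrightarrow> norm x = 1"
      "independent B" "card B = m"
    using orthonormal_basis_subspace[OF assms(1)] assms(2) by metis
  obtain b where b: "bij_betw b {..<m} B"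
    using finiteI_independent[OF B(4)] B(5) ex_bij_betw_nat_finite lessThan_atLeast0 by metis
  have "b i \<bullet> b k = (if i = k then 1 else 0)" if "i < m" "k < m" for i k
  proof (cases "i = k")
    case True
    then show ?thesis using B(3) b that by (simp add: dot_square_norm bij_betwE)
  next
    case False
    then have "b i \<noteq> b k" using b that by (auto simp: bij_betw_def inj_on_def)
    then show ?thesis
      using B(2) b that False by (auto simp: pairwise_def orthogonal_def bij_betwE)
  qed
  then show ?thesis using that B(1) b by (blast dest: bij_betwE)
qed

lemma orthonormal_coordinates_cube_subset:
  fixes b :: "nat \<Rightarrow> 'a::real_inner"
  assumes L: "subspace L" "z \<in> L" "\<And>i. i < m \<Longrightarrow> b i \<in> L"
    and b: "\<And>i k. i < m \<Longrightarrow> k < m \<Longrightarrow> b i \<bullet> b k = (if i = k then 1 else 0)"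
    and s: "0 < s"
  shows "PiE {..<m} (\<lambda>j. {z \<bullet> b j - s / (real m + 1) .. z \<bullet> b j + s / (real m + 1)})
    \<subseteq> (\<lambda>x. restrict (\<lambda>j. x \<bullet> b j) {..<m}) ` (L \<inter> ball z s)"
proof
  fix q assume q: "q \<in> PiE {..<m} (\<lambda>j. {z \<bullet> b j - s / (real m + 1) .. z \<bullet> b j + s / (real m + 1)})"
  define x where "x = z + (\<Sum>i<m. (q i - z \<bullet> b i) *\<^sub>R b i)"
  have "x \<in> L" unfolding x_def using L by (intro subspace_add subspace_sum subspace_scale) auto
  have "norm (x - z) \<le> (\<Sum>i<m. norm ((q i - z \<bullet> b i) *\<^sub>R b i))"
    unfolding x_def add_diff_cancel_left' by (rule norm_sum)
  also have "\<dots> \<le> (\<Sum>i<m. s / (real m + 1))"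
  proof (intro sum_mono)
    fix i assume "i \<in> {..<m}"
    then have "q i \<in> {z \<bullet> b i - s / (real m + 1) .. z \<bullet> b i + s / (real m + 1)}" "norm (b i) = 1"
      using q b[of i i] by (auto simp: PiE_iff norm_eq_sqrt_inner)
    then show "norm ((q i - z \<bullet> b i) *\<^sub>R b i) \<le> s / (real m + 1)" by (simp add: abs_le_iff)
  qed
  also have "\<dots> < s" using s by (simp add: field_simps)
  finally have "x \<in> ball z s" by (simp add: dist_norm norm_minus_commute)
  have "x \<bullet> b j = q j" if j: "j < m" for j
  proof -
    have "x \<bullet> b j = z \<bullet> b j + (\<Sum>i<m. (q i - z \<bullet> b i) * (b i \<bullet> b j))"
      unfolding x_def by (simp add: inner_add_left inner_sum_left)
    also have "(\<Sum>i<m. (q i - z \<bullet> b i) * (b i \<bullet> b j)) = (\<Sum>i<m. if i = j then q i - z \<bullet> b i else 0)"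
      using b j by (intro sum.cong) auto
    finally show ?thesis using j by simp
  qed
  then have "q = restrict (\<lambda>j. x \<bullet> b j) {..<m}" using q by (auto simp: PiE_iff extensional_def)
  then show "q \<in> (\<lambda>x. restrict (\<lambda>j. x \<bullet> b j) {..<m}) ` (L \<inter> ball z s)"
    using \<open>x \<in> L\<close> \<open>x \<in> ball z s\<close> by blast
qed

lemma hausdorff_measure_submanifold_ball_pos:
  fixes M :: "'a::euclidean_space set"
  assumes "embedded_submanifold m M" "x0 \<in> M" "0 < r"
  shows "0 < hausdorff_measure m (M \<inter> ball x0 r)"
proof -
  obtain \<phi> :: "'a \<Rightarrow> 'a" and L K \<delta> s where chart: "subspace L" "dim L = m" "0 < K" "0 < \<delta>" "\<delta> \<le> r"
      "0 < s" "\<phi> x0 \<in> L" "K-lipschitz_on (M \<inter> ball x0 \<delta>) \<phi>"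
      "L \<inter> ball (\<phi> x0) s \<subseteq> \<phi> ` (M \<inter> ball x0 \<delta>)"
    by (rule embedded_submanifold_lipschitz_chart[OF assms])
  obtain b where b: "\<And>i. i < m \<Longrightarrow> b i \<in> L"
      "\<And>i k. i < m \<Longrightarrow> k < m \<Longrightarrow> b i \<bullet> b k = (if i = k then 1 else 0)"
    using subspace_orthonormal_frame[OF chart(1,2)] by blast
  define T where "T = M \<inter> ball x0 \<delta>"
  define coords where "coords x = restrict (\<lambda>j. x \<bullet> b j) {..<m}" for x
  define Q where "Q = PiE {..<m} (\<lambda>j. {\<phi> x0 \<bullet> b j - s / (real m + 1) .. \<phi> x0 \<bullet> b j + s / (real m + 1)})"
  have lip: "\<bar>coords (\<phi> t) j - coords (\<phi> t') j\<bar> \<le> K * dist t t'" if "t \<in> T" "t' \<in> T" "j < m" for t t' j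
  proof -
    have "\<bar>coords (\<phi> t) j - coords (\<phi> t') j\<bar> = \<bar>(\<phi> t - \<phi> t') \<bullet> b j\<bar>"
      using that(3) by (simp add: coords_def inner_diff_left)
    also have "\<dots> \<le> norm (\<phi> t - \<phi> t') * norm (b j)" by (rule Cauchy_Schwarz_ineq2)
    also have "norm (b j) = 1" using b(2)[OF that(3) that(3)] by (simp add: norm_eq_sqrt_inner)
    also have "norm (\<phi> t - \<phi> t') * 1 \<le> K * dist t t'"
      using lipschitz_onD[OF chart(8)] that unfolding T_def by (simp add: dist_norm)
    finally show ?thesis .
  qed
  have "Q \<subseteq> coords ` (L \<inter> ball (\<phi> x0) s)"
    unfolding Q_def coords_def using chart(1,7) b chart(6) by (rule orthonormal_coordinates_cube_subset)
  also have "\<dots> \<subseteq> coords ` \<phi> ` T" using chart(9) unfolding T_def by (rule image_mono)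
  finally have "Q \<subseteq> (\<lambda>t. coords (\<phi> t)) ` T" by (simp add: image_image)
  moreover have "0 < emeasure (PiM {..<m} (\<lambda>_. lborel)) Q"
    unfolding Q_def using chart(6) by (simp add: emeasure_PiM_cube)
  ultimately have "0 < hausdorff_measure m T"
    using lip chart(3) by (intro hausdorff_measure_pos_of_lipschitz_coordinates) (auto simp: Q_def sets_PiM_box)
  also have "\<dots> \<le> hausdorff_measure m (M \<inter> ball x0 r)"
    using chart(5) unfolding T_def by (intro hausdorff_measure_mono) auto
  finally show ?thesis .
qed

section \<open>The volume measure\<close>

lemma space_Vol [simp]: "space (Vol m M) = M"
  unfolding Vol_def by (simp add: space_measure_of_conv)

lemma sets_Vol: "sets (Vol m (M::'a::euclidean_space set)) = sets (restrict_space borel M)"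
proof -
  have sa: "sigma_algebra M ((\<inter>) M ` sets (borel :: 'a measure))"
    using sets.sigma_algebra_axioms[of "restrict_space borel M"]
    by (simp add: sets_restrict_space space_restrict_space)
  have "{M \<inter> B | B. B \<in> sets borel} = (\<inter>) M ` sets (borel :: 'a measure)" by auto
  then have "sets (Vol m M) = sigma_sets M ((\<inter>) M ` sets (borel :: 'a measure))"
    unfolding Vol_def sets_measure_of_conv by auto
  also have "\<dots> = (\<inter>) M ` sets borel" using sigma_algebra.sigma_sets_eq[OF sa] .
  finally show ?thesis by (simp add: sets_restrict_space)
qed

text \<open>The measure built by measure_of is the null measure unless hausdorff_measure is
  countably additive on these sets; a nonzero integral excludes that degenerate case.\<close>

lemma emeasure_Vol:
  assumes "(\<integral>\<^sup>+ x. f x \<partial>(Vol m M)) \<noteq> 0" and A: "A \<in> sets (Vol m M)"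
  shows "emeasure (Vol m M) A = hausdorff_measure m A"
proof -
  let ?G = "{M \<inter> B | B. B \<in> sets (borel::'a measure)}"
  have "measure_space M (sigma_sets M ?G) (hausdorff_measure m)"
  proof (rule ccontr)
    assume "\<not> ?thesis"
    then have "emeasure (Vol m M) B = 0" for B
      unfolding Vol_def emeasure_measure_of_conv by simp
    then have "AE x in Vol m M. False"
      by (intro AE_I'[where N="space (Vol m M)"]) (auto simp: null_sets_def simp del: space_Vol)
    then have "(\<integral>\<^sup>+ x. f x \<partial>(Vol m M)) = (\<integral>\<^sup>+ x. 0 \<partial>(Vol m M))"
      by (intro nn_integral_cong_AE) auto
    then show False using assms(1) by simp
  qed
  moreover have "?G \<subseteq> Pow M" by auto
  then have "A \<in> sigma_sets M ?G" using A unfolding Vol_def sets_measure_of_conv by simp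
  ultimately show ?thesis unfolding Vol_def emeasure_measure_of_conv by simp
qed

lemma emeasure_Vol_submanifold_ball_pos:
  fixes M :: "'a::euclidean_space set"
  assumes "embedded_submanifold m M" "x0 \<in> M" "0 < r" "(\<integral>\<^sup>+ x. f x \<partial>(Vol m M)) \<noteq> 0"
  shows "0 < emeasure (Vol m M) (M \<inter> ball x0 r)"
proof -
  have "M \<inter> ball x0 r \<in> sets (Vol m M)" by (auto simp: sets_Vol sets_restrict_space)
  then show ?thesis
    using emeasure_Vol[OF assms(4)] hausdorff_measure_submanifold_ball_pos[OF assms(1-3)] by simp
qed

lemma borel_measurable_Vol_continuous_on:
  "continuous_on M f \<Longrightarrow> f \<in> borel_measurable (Vol m (M::'a::euclidean_space set))"
  by (subst measurable_cong_sets[OF sets_Vol refl]) (rule borel_measurable_continuous_on_restrict)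

section \<open>Lipschitz maps and strict convexity\<close>

lemma Lip_le: "C-lipschitz_on X f \<Longrightarrow> Lip X f \<le> C"
  unfolding Lip_def by (rule cInf_lower) (auto intro: bdd_belowI[where m=0] simp: lipschitz_on_def)

lemma lipschitz_on_Lip:
  assumes "C-lipschitz_on X f"
  shows "(Lip X f)-lipschitz_on X f"
proof (rule lipschitz_onI)
  show "0 \<le> Lip X f"
    unfolding Lip_def using assms by (intro cInf_greatest) (auto simp: lipschitz_on_def)
  fix x y assume xy: "x \<in> X" "y \<in> X"
  show "dist (f x) (f y) \<le> Lip X f * dist x y"
  proof (cases "x = y")
    case False
    have "dist (f x) (f y) / dist x y \<le> Lip X f"
      unfolding Lip_def using assms xy False
      by (intro cInf_greatest) (auto simp: lipschitz_on_def divide_le_eq)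
    then show ?thesis using False by (simp add: divide_le_eq)
  qed simp
qed

lemma Lip_nonneg: "f \<in> W1inf X Y \<Longrightarrow> 0 \<le> Lip X f"
  unfolding W1inf_def by (auto intro: lipschitz_on_nonneg lipschitz_on_Lip)

lemma W1inf_continuous_on: "f \<in> W1inf X Y \<Longrightarrow> M \<subseteq> X \<Longrightarrow> continuous_on M f"
  unfolding W1inf_def by (auto intro: lipschitz_on_continuous_on continuous_on_subset)

lemma midpoint_W1inf:
  fixes u v :: "'a::metric_space \<Rightarrow> 'b::real_normed_vector"
  assumes Y: "convex Y" and u: "u \<in> W1inf X Y" and v: "v \<in> W1inf X Y"
  shows "(\<lambda>x. midpoint (u x) (v x)) \<in> W1inf X Y"
    and "Lip X (\<lambda>x. midpoint (u x) (v x)) \<le> (Lip X u + Lip X v) / 2"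
proof -
  have "(Lip X u)-lipschitz_on X u" "(Lip X v)-lipschitz_on X v"
    using u v unfolding W1inf_def by (auto intro: lipschitz_on_Lip)
  then have lip: "((Lip X u + Lip X v) / 2)-lipschitz_on X (\<lambda>x. midpoint (u x) (v x))"
    using lipschitz_on_cmult_nonneg[OF lipschitz_on_add, of _ X u _ v "inverse 2"]
    by (simp add: midpoint_def field_simps)
  have "midpoint (u x) (v x) \<in> Y" if "x \<in> X" for x
    using u v that Y midpoint_in_closed_segment unfolding W1inf_def convex_contains_segment by blast
  then show "(\<lambda>x. midpoint (u x) (v x)) \<in> W1inf X Y" using lip unfolding W1inf_def by blast
  show "Lip X (\<lambda>x. midpoint (u x) (v x)) \<le> (Lip X u + Lip X v) / 2"
    using lip by (rule Lip_le)
qed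

lemma continuous_on_neq_ball:
  fixes f g :: "'a::metric_space \<Rightarrow> 'b::metric_space"
  assumes "continuous_on S f" "continuous_on S g" "x0 \<in> S" "f x0 \<noteq> g x0"
  obtains r where "0 < r" "\<And>x. x \<in> S \<Longrightarrow> x \<in> ball x0 r \<Longrightarrow> f x \<noteq> g x"
proof -
  have "continuous_on S (\<lambda>x. dist (f x) (g x))" using assms(1,2) by (intro continuous_intros)
  then obtain r where "0 < r"
    "\<forall>x\<in>S. dist x x0 < r \<longrightarrow> dist (dist (f x) (g x)) (dist (f x0) (g x0)) < dist (f x0) (g x0)"
    using assms(3,4) unfolding continuous_on_iff by (meson zero_less_dist_iff)
  then show ?thesis
    by (intro that[of r]) (auto simp: dist_commute dist_real_def)
qed

lemma strictly_convex_on_midpoint_less: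
  assumes "strictly_convex_on Y f" "a \<in> Y" "b \<in> Y" "a \<noteq> b"
  shows "f (midpoint a b) < (f a + f b) / 2"
proof -
  have "\<forall>t. a \<noteq> b \<and> 0 < t \<and> t < 1 \<longrightarrow> f ((1 - t) *\<^sub>R a + t *\<^sub>R b) < (1 - t) * f a + t * f b"
    using assms(1-3) unfolding strictly_convex_on_def by blast
  from spec[OF this, of "1/2"] assms(4) show ?thesis by (simp add: midpoint_def scaleR_right_distrib)
qed

lemma strictly_convex_on_mult_pos:
  assumes "strictly_convex_on Y f" "0 < c"
  shows "strictly_convex_on Y (\<lambda>x. f x * c)"
  unfolding strictly_convex_on_def
proof (intro ballI allI impI)
  fix a b and t :: real
  assume "a \<in> Y" "b \<in> Y" "a \<noteq> b \<and> 0 < t \<and> t < 1"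
  then have "f ((1 - t) *\<^sub>R a + t *\<^sub>R b) < (1 - t) * f a + t * f b"
    using assms(1) unfolding strictly_convex_on_def by blast
  then have "f ((1 - t) *\<^sub>R a + t *\<^sub>R b) * c < ((1 - t) * f a + t * f b) * c"
    using assms(2) by (rule mult_strict_right_mono)
  then show "f ((1 - t) *\<^sub>R a + t *\<^sub>R b) * c < (1 - t) * (f a * c) + t * (f b * c)"
    by (simp add: algebra_simps)
qed

lemma strictly_convex_on_midpoint_le:
  assumes "strictly_convex_on Y f" "a \<in> Y" "b \<in> Y"
  shows "f (midpoint a b) \<le> (f a + f b) / 2"
  using strictly_convex_on_midpoint_less[OF assms] by (cases "a = b") auto

definition loss_integrand ::
    "('b \<Rightarrow> 'b \<Rightarrow> real) \<Rightarrow> ('a \<Rightarrow> 'b) \<Rightarrow> ('a \<Rightarrow> real) \<Rightarrow> ('a \<Rightarrow> 'b) \<Rightarrow> 'a \<Rightarrow> real"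
  where "loss_integrand loss y \<rho> f x = loss (f x) (y x) * \<rho> x"

lemma Jfun_eq_loss_integrand:
  "Jfun \<mu> loss y \<rho> lam X f = (\<integral>\<^sup>+ x. loss_integrand loss y \<rho> f x \<partial>\<mu>) + ennreal (lam * Lip X f)"
  by (simp add: Jfun_def loss_integrand_def)

lemma borel_measurable_loss_integrand:
  fixes loss :: "'b::topological_space \<Rightarrow> 'b \<Rightarrow> real"
  assumes loss: "(\<lambda>p. loss (fst p) (snd p)) \<in> borel_measurable (restrict_space (borel \<Otimes>\<^sub>M borel) (Y \<times> Y))"
    and f: "f \<in> borel_measurable \<mu>" "\<And>x. x \<in> space \<mu> \<Longrightarrow> f x \<in> Y"
    and y: "y \<in> borel_measurable \<mu>" "\<And>x. x \<in> space \<mu> \<Longrightarrow> y x \<in> Y"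
    and \<rho>: "\<rho> \<in> borel_measurable \<mu>"
  shows "loss_integrand loss y \<rho> f \<in> borel_measurable \<mu>"
proof -
  have "(\<lambda>x. (f x, y x)) \<in> measurable \<mu> (restrict_space (borel \<Otimes>\<^sub>M borel) (Y \<times> Y))"
    using f y by (intro measurable_restrict_space2 measurable_Pair) auto
  from measurable_compose[OF this loss] have "(\<lambda>x. loss (f x) (y x)) \<in> borel_measurable \<mu>" by simp
  with \<rho> show ?thesis unfolding loss_integrand_def[abs_def] by (rule borel_measurable_times[rotated])
qed

lemma nn_integral_add_eq_midpoint_gap:
  fixes f g h :: "'a \<Rightarrow> real"
  assumes meas: "f \<in> borel_measurable \<mu>" "g \<in> borel_measurable \<mu>" "h \<in> borel_measurable \<mu>"
    and nonneg: "\<And>x. x \<in> space \<mu> \<Longrightarrow> 0 \<le> f x" "\<And>x. x \<in> space \<mu> \<Longrightarrow> 0 \<le> g x"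
      "\<And>x. x \<in> space \<mu> \<Longrightarrow> 0 \<le> h x"
    and below: "\<And>x. x \<in> space \<mu> \<Longrightarrow> h x \<le> (f x + g x) / 2"
  shows "(\<integral>\<^sup>+ x. f x \<partial>\<mu>) + (\<integral>\<^sup>+ x. g x \<partial>\<mu>)
    = 2 * (\<integral>\<^sup>+ x. h x \<partial>\<mu>) + 2 * (\<integral>\<^sup>+ x. ennreal ((f x + g x) / 2 - h x) \<partial>\<mu>)"
proof -
  define gap where "gap x = (f x + g x) / 2 - h x" for x
  have gap_nonneg: "0 \<le> gap x" if "x \<in> space \<mu>" for x using below[OF that] by (simp add: gap_def)
  have gap_meas: "gap \<in> borel_measurable \<mu>" unfolding gap_def using meas by measurable
  have "(\<integral>\<^sup>+ x. f x \<partial>\<mu>) + (\<integral>\<^sup>+ x. g x \<partial>\<mu>) = (\<integral>\<^sup>+ x. ennreal (f x) + ennreal (g x) \<partial>\<mu>)"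
    using meas by (intro nn_integral_add[symmetric]) auto
  also have "\<dots> = (\<integral>\<^sup>+ x. 2 * ennreal (h x) + 2 * ennreal (gap x) \<partial>\<mu>)"
  proof (intro nn_integral_cong)
    fix x assume x: "x \<in> space \<mu>"
    have "f x + g x = 2 * h x + 2 * gap x" by (simp add: gap_def)
    then show "ennreal (f x) + ennreal (g x) = 2 * ennreal (h x) + 2 * ennreal (gap x)"
      using nonneg[OF x] gap_nonneg[OF x] by (simp add: ennreal_plus[symmetric] ennreal_mult)
  qed
  also have "\<dots> = 2 * (\<integral>\<^sup>+ x. h x \<partial>\<mu>) + 2 * (\<integral>\<^sup>+ x. gap x \<partial>\<mu>)"
    using meas gap_meas by (simp add: nn_integral_add nn_integral_cmult)
  finally show ?thesis unfolding gap_def .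
qed

lemma AE_eq_midpoint_of_minimal:
  fixes f g h :: "'a \<Rightarrow> real"
  assumes meas: "f \<in> borel_measurable \<mu>" "g \<in> borel_measurable \<mu>" "h \<in> borel_measurable \<mu>"
    and nonneg: "\<And>x. x \<in> space \<mu> \<Longrightarrow> 0 \<le> f x" "\<And>x. x \<in> space \<mu> \<Longrightarrow> 0 \<le> g x"
      "\<And>x. x \<in> space \<mu> \<Longrightarrow> 0 \<le> h x"
    and below: "\<And>x. x \<in> space \<mu> \<Longrightarrow> h x \<le> (f x + g x) / 2"
    and abc: "0 \<le> a" "0 \<le> b" "c \<le> (a + b) / 2"
    and f_min: "(\<integral>\<^sup>+ x. f x \<partial>\<mu>) + ennreal a \<le> (\<integral>\<^sup>+ x. h x \<partial>\<mu>) + ennreal c"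
    and g_min: "(\<integral>\<^sup>+ x. g x \<partial>\<mu>) + ennreal b \<le> (\<integral>\<^sup>+ x. h x \<partial>\<mu>) + ennreal c"
    and finite: "(\<integral>\<^sup>+ x. f x \<partial>\<mu>) < \<infinity>" "(\<integral>\<^sup>+ x. g x \<partial>\<mu>) < \<infinity>"
  shows "AE x in \<mu>. h x = (f x + g x) / 2"
proof -
  define If Ig Ih Igap where "If = (\<integral>\<^sup>+ x. f x \<partial>\<mu>)" and "Ig = (\<integral>\<^sup>+ x. g x \<partial>\<mu>)"
    and "Ih = (\<integral>\<^sup>+ x. h x \<partial>\<mu>)" and "Igap = (\<integral>\<^sup>+ x. ennreal ((f x + g x) / 2 - h x) \<partial>\<mu>)"
  have split: "If + Ig = 2 * Ih + 2 * Igap"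
    unfolding If_def Ig_def Ih_def Igap_def using assms(1-7) by (rule nn_integral_add_eq_midpoint_gap)
  have "ennreal (2 * c) \<le> ennreal (a + b)" using abc by (intro ennreal_leI) simp
  then have penalty: "2 * ennreal c \<le> ennreal a + ennreal b"
    using abc by (simp add: ennreal_mult' ennreal_plus)
  have "2 * Ih + (ennreal a + ennreal b) + 2 * Igap = (If + ennreal a) + (Ig + ennreal b)"
    using split by (simp add: ac_simps)
  also have "\<dots> \<le> (Ih + ennreal c) + (Ih + ennreal c)"
    using f_min g_min unfolding If_def Ig_def Ih_def by (rule add_mono)
  also have "\<dots> = 2 * Ih + 2 * ennreal c" by (simp only: mult_2 add_ac)
  also have "\<dots> \<le> 2 * Ih + (ennreal a + ennreal b)" using penalty by (rule add_left_mono)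
  finally have "2 * Ih + (ennreal a + ennreal b) + 2 * Igap \<le> 2 * Ih + (ennreal a + ennreal b) + 0"
    by simp
  moreover have "2 * Ih + (ennreal a + ennreal b) \<noteq> \<infinity>"
  proof -
    have "2 * Ih \<le> If + Ig" using split by simp
    also have "\<dots> < \<infinity>" using finite unfolding If_def Ig_def by (simp add: ennreal_add_less_top)
    finally show ?thesis by (simp add: ennreal_add_less_top)
  qed
  ultimately have "Igap = 0" using ennreal_add_left_cancel_le by simp
  moreover have "(\<lambda>x. (f x + g x) / 2 - h x) \<in> borel_measurable \<mu>" using meas by measurable
  ultimately have "AE x in \<mu>. ennreal ((f x + g x) / 2 - h x) = 0"
    unfolding Igap_def by (simp add: nn_integral_0_iff_AE)
  then show ?thesis
    by (rule AE_mp) (auto intro!: AE_I2 dest: below)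
qed

lemma AE_loss_integrand_midpoint_eq_of_minimizers:
  fixes M X :: "'a::euclidean_space set" and Y :: "'b::real_normed_vector set"
    and \<rho> :: "'a \<Rightarrow> real" and y :: "'a \<Rightarrow> 'b" and loss :: "'b \<Rightarrow> 'b \<Rightarrow> real"
  assumes Y: "convex Y" and M: "M \<subseteq> X"
    and \<rho>: "\<rho> \<in> borel_measurable (Vol m M)" "\<And>x. x \<in> M \<Longrightarrow> 0 < \<rho> x"
    and y: "y ` M \<subseteq> Y" "y \<in> borel_measurable (Vol m M)"
    and l_meas: "(\<lambda>p. loss (fst p) (snd p)) \<in> borel_measurable (restrict_space (borel \<Otimes>\<^sub>M borel) (Y \<times> Y))"
    and l_nonneg: "\<forall>y1\<in>Y. \<forall>y2\<in>Y. loss y1 y2 \<ge> 0"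
    and l_strict: "\<forall>y2\<in>Y. strictly_convex_on Y (\<lambda>y1. loss y1 y2)"
    and lam: "0 \<le> lam"
    and u_min: "is_minimizer (W1inf X Y) (Jfun (Vol m M) loss y \<rho> lam X) u"
    and v_min: "is_minimizer (W1inf X Y) (Jfun (Vol m M) loss y \<rho> lam X) v"
  shows "AE x in Vol m M. loss_integrand loss y \<rho> (\<lambda>x. midpoint (u x) (v x)) x
    = (loss_integrand loss y \<rho> u x + loss_integrand loss y \<rho> v x) / 2"
proof -
  define w where "w = (\<lambda>x. midpoint (u x) (v x))"
  let ?F = "loss_integrand loss y \<rho>"
  have W: "u \<in> W1inf X Y" "v \<in> W1inf X Y" using u_min v_min by (simp_all add: is_minimizer_def)
  have wW: "w \<in> W1inf X Y" and Lip_w: "Lip X w \<le> (Lip X u + Lip X v) / 2"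
    using midpoint_W1inf[OF Y W] unfolding w_def by simp_all
  have J: "(\<integral>\<^sup>+ x. ?F u x \<partial>Vol m M) + ennreal (lam * Lip X u)
      \<le> (\<integral>\<^sup>+ x. ?F w x \<partial>Vol m M) + ennreal (lam * Lip X w)"
    "(\<integral>\<^sup>+ x. ?F v x \<partial>Vol m M) + ennreal (lam * Lip X v)
      \<le> (\<integral>\<^sup>+ x. ?F w x \<partial>Vol m M) + ennreal (lam * Lip X w)"
    "(\<integral>\<^sup>+ x. ?F u x \<partial>Vol m M) < \<infinity>" "(\<integral>\<^sup>+ x. ?F v x \<partial>Vol m M) < \<infinity>"
    using u_min v_min wW unfolding is_minimizer_def Jfun_eq_loss_integrand by (auto simp: ennreal_add_less_top)
  have in_Y: "f x \<in> Y" if "f \<in> W1inf X Y" "x \<in> M" for f x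
    using that M by (auto simp: W1inf_def)
  have F_meas: "?F f \<in> borel_measurable (Vol m M)" if "f \<in> W1inf X Y" for f
    by (rule borel_measurable_loss_integrand[OF l_meas
          borel_measurable_Vol_continuous_on[OF W1inf_continuous_on[OF that M]] _ y(2) _ \<rho>(1)])
      (use in_Y[OF that] y(1) in auto)
  have F_nonneg: "0 \<le> ?F f x" if "f \<in> W1inf X Y" "x \<in> M" for f x
    using l_nonneg in_Y[OF that] y(1) \<rho>(2)[OF that(2)] that(2)
    by (simp add: loss_integrand_def image_subset_iff)
  have F_mid: "?F w x \<le> (?F u x + ?F v x) / 2" if "x \<in> M" for x
    unfolding w_def loss_integrand_def
    using l_strict in_Y[OF W(1) that] in_Y[OF W(2) that] y(1) that \<rho>(2)[OF that]
    by (intro strictly_convex_on_midpoint_le strictly_convex_on_mult_pos) auto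
  have "lam * Lip X w \<le> (lam * Lip X u + lam * Lip X v) / 2"
    using mult_left_mono[OF Lip_w lam] by (simp add: distrib_left)
  then show ?thesis
    unfolding w_def[symmetric]
    using F_meas[OF W(1)] F_meas[OF W(2)] F_meas[OF wW] F_nonneg[OF W(1)] F_nonneg[OF W(2)] F_nonneg[OF wW]
      F_mid lam Lip_nonneg[OF W(1)] Lip_nonneg[OF W(2)] J
    by (intro AE_eq_midpoint_of_minimal) auto
qed

theorem mainTheorem5:
  fixes M :: "'a::euclidean_space set" and m :: nat
    and Y :: "'b::real_normed_vector set"
    and \<rho> :: "'a \<Rightarrow> real" and y :: "'a \<Rightarrow> 'b" and loss :: "'b \<Rightarrow> 'b \<Rightarrow> real"
    and lam :: real and u v :: "'a \<Rightarrow> 'b"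
  defines "X \<equiv> cbox (0::'a) One"
  assumes findim: "\<exists>B::'b set. finite B \<and> span B = UNIV"
    and Y_convex: "convex Y"
    and M_sub: "M \<subseteq> X" and M_compact: "compact M" and M_mfd: "embedded_submanifold m M"
    and rho_meas: "\<rho> \<in> borel_measurable (Vol m M)"
    and rho_prob: "(\<integral>\<^sup>+ x. ennreal (\<rho> x) \<partial>(Vol m M)) = 1"
    and rho_inf: "\<exists>c>0. \<forall>x\<in>M. c \<le> \<rho> x"
    and y_maps: "y ` X \<subseteq> Y"
    and y_meas: "y \<in> borel_measurable (Vol m M)"
    and l_meas: "(\<lambda>p. loss (fst p) (snd p)) \<in> borel_measurable (restrict_space (borel \<Otimes>\<^sub>M borel) (Y \<times> Y))"
    and l_nonneg: "\<forall>y1\<in>Y. \<forall>y2\<in>Y. loss y1 y2 \<ge> 0"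
    and l_zero: "\<forall>y1\<in>Y. \<forall>y2\<in>Y. loss y1 y2 = 0 \<longleftrightarrow> y1 = y2"
    and l_strict: "\<forall>y2\<in>Y. strictly_convex_on Y (\<lambda>y1. loss y1 y2)"
    and lam: "lam > 0"
    and u_min: "is_minimizer (W1inf X Y) (Jfun (Vol m M) loss y \<rho> lam X) u"
    and v_min: "is_minimizer (W1inf X Y) (Jfun (Vol m M) loss y \<rho> lam X) v"
  shows "\<forall>x\<in>M. u x = v x"
proof (rule ccontr)
  assume "\<not> (\<forall>x\<in>M. u x = v x)"
  then obtain x0 where x0: "x0 \<in> M" "u x0 \<noteq> v x0" by blast
  have \<rho>_pos: "\<And>x. x \<in> M \<Longrightarrow> 0 < \<rho> x" using rho_inf by (auto intro: less_le_trans)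
  have W: "u \<in> W1inf X Y" "v \<in> W1inf X Y" using u_min v_min by (simp_all add: is_minimizer_def)
  obtain r where r: "0 < r" "\<And>x. x \<in> M \<Longrightarrow> x \<in> ball x0 r \<Longrightarrow> u x \<noteq> v x"
    using continuous_on_neq_ball[OF W1inf_continuous_on[OF W(1) M_sub] W1inf_continuous_on[OF W(2) M_sub] x0]
    by blast
  have gap: "AE x in Vol m M. loss_integrand loss y \<rho> (\<lambda>x. midpoint (u x) (v x)) x
      = (loss_integrand loss y \<rho> u x + loss_integrand loss y \<rho> v x) / 2"
    using Y_convex M_sub rho_meas \<rho>_pos y_maps y_meas l_meas l_nonneg l_strict lam u_min v_min
    by (intro AE_loss_integrand_midpoint_eq_of_minimizers) auto
  have strict: "loss_integrand loss y \<rho> (\<lambda>x. midpoint (u x) (v x)) x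
      < (loss_integrand loss y \<rho> u x + loss_integrand loss y \<rho> v x) / 2" if "x \<in> M \<inter> ball x0 r" for x
    unfolding loss_integrand_def using W M_sub y_maps l_strict r(2) \<rho>_pos that
    by (intro strictly_convex_on_midpoint_less strictly_convex_on_mult_pos)
      (auto simp: W1inf_def image_subset_iff subset_iff)
  have "AE x in Vol m M. x \<notin> M \<inter> ball x0 r"
    using gap by (rule AE_mp) (use strict in \<open>fastforce intro!: AE_I2\<close>)
  moreover have "M \<inter> ball x0 r \<in> sets (Vol m M)" by (auto simp: sets_Vol sets_restrict_space)
  ultimately have "emeasure (Vol m M) (M \<inter> ball x0 r) = 0"
    by (simp only: AE_iff_null_sets[symmetric] null_sets_def mem_Collect_eq)
  moreover have "0 < emeasure (Vol m M) (M \<inter> ball x0 r)"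
    using emeasure_Vol_submanifold_ball_pos[OF M_mfd x0(1) r(1), where f = "\<lambda>x. ennreal (\<rho> x)"] rho_prob
    by simp
  ultimately show False by simp
qed

end
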